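(* Let $f:\mathbb{R}^n\to\mathbb{R}$ be twice continuously differentiable with $L$-Lipschitz gradient. If $0<\alpha<\frac1L$, then each map $g^s_{\alpha f}(x)=x-\alpha U_s\nabla_sf(x)$, $s=1,\dots,p$, is a diffeomorphism of $\mathbb{R}^n$.
   Context: $\|\nabla f(x)-\nabla f(y)\|\le L\|x-y\|$ for all $x,y$, $L>0$. The variable is partitioned as $x=(x(1),\dots,x(p))$, $x(s)\in\mathbb{R}^{n_s}$, $\sum_sn_s=n$; $U_s\in\mathbb{R}^{n\times n_s}$ is the $s$-th block-column of $I_n$ and $\nabla_sf(x)=U_s^T\nabla f(x)$. *)

theory Defs
  imports "HOL-Analysis.Analysis"
begin

definition C1_map :: "(real^'n \<Rightarrow> real^'n) \<Rightarrow> bool" where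
  "C1_map g \<longleftrightarrow> (\<exists>D :: real^'n \<Rightarrow> ((real^'n) \<Rightarrow>\<^sub>L (real^'n)).
      (\<forall>x. (g has_derivative blinfun_apply (D x)) (at x)) \<and> continuous_on UNIV D)"

definition diffeomorphism :: "(real^'n \<Rightarrow> real^'n) \<Rightarrow> bool" where
  "diffeomorphism g \<longleftrightarrow> bij g \<and> C1_map g \<and> C1_map (inv g)"

text \<open>U_s U_s^T v: keep the coordinates of v in block S, zero the others.\<close>
definition block_embed :: "'n set \<Rightarrow> real^'n \<Rightarrow> real^'n" where
  "block_embed S v = (\<chi> i. if i \<in> S then v $ i else 0)"

end

theory Submission
  imports Defs
begin

(* With h x = \<alpha> U_s \<nabla>_s f(x), the map h is \<alpha>L-Lipschitz and \<alpha>L < 1.  Hence x - h x is a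
   bijection (Banach's fixed point theorem applied to x \<mapsto> y + h x) and it expands distances
   by at least the factor 1 - \<alpha>L.  The same lower bound passes to its derivatives, which are
   therefore invertible with inverses bounded by 1 / (1 - \<alpha>L); the inverse function theorem
   gives the derivative of the inverse map, and it is continuous because operator inversion
   is continuous on a uniformly bounded family of inverses. *)

lemma has_derivative_difference_quotient:
  fixes F :: "'a::real_normed_vector \<Rightarrow> 'b::real_normed_vector"
  assumes "(F has_derivative F') (at x)"
  shows "((\<lambda>t. (F (x + t *\<^sub>R v) - F x) /\<^sub>R t) \<longlongrightarrow> F' v) (at 0)"
proof -
  have "((\<lambda>t. F (x + t *\<^sub>R v)) has_derivative (\<lambda>t. F' (t *\<^sub>R v))) (at 0)"
    using assms
    by (auto intro!: derivative_eq_intros has_derivative_compose[of "\<lambda>t. x + t *\<^sub>R v" _ 0 _ F])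
  then have "((\<lambda>t. norm (F (x + t *\<^sub>R v) - F x - t *\<^sub>R F' v) / norm t) \<longlongrightarrow> 0) (at 0)"
    using has_derivative_linear[OF assms] by (simp add: has_derivative_at linear_scale)
  moreover have "norm (F (x + t *\<^sub>R v) - F x - t *\<^sub>R F' v) / norm t
      = norm ((F (x + t *\<^sub>R v) - F x) /\<^sub>R t - F' v)" if "t \<noteq> 0" for t
  proof -
    have "(F (x + t *\<^sub>R v) - F x) /\<^sub>R t - F' v = (F (x + t *\<^sub>R v) - F x - t *\<^sub>R F' v) /\<^sub>R t"
      using that by (simp add: algebra_simps)
    then show ?thesis by (simp add: divide_inverse_commute)
  qed
  ultimately have "((\<lambda>t. norm ((F (x + t *\<^sub>R v) - F x) /\<^sub>R t - F' v)) \<longlongrightarrow> 0) (at 0)"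
    by (elim Lim_transform_eventually) (auto simp: eventually_at_filter)
  then show ?thesis
    by (simp add: tendsto_norm_zero_iff LIM_zero_iff)
qed

lemma norm_derivative_ge_of_expanding_at:
  fixes F :: "'a::real_normed_vector \<Rightarrow> 'b::real_normed_vector"
  assumes "(F has_derivative F') (at x)"
    and "\<And>y. m * norm (y - x) \<le> norm (F y - F x)"
  shows "m * norm v \<le> norm (F' v)"
proof (rule Lim_norm_lbound[OF _ has_derivative_difference_quotient[OF assms(1)]])
  have "m * norm v \<le> norm ((F (x + t *\<^sub>R v) - F x) /\<^sub>R t)" if "t \<noteq> 0" for t
    using assms(2)[of "x + t *\<^sub>R v"] that
    by (simp add: divide_inverse_commute) (simp add: field_simps mult_ac)
  then show "\<forall>\<^sub>F t in at 0. m * norm v \<le> norm ((F (x + t *\<^sub>R v) - F x) /\<^sub>R t)"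
    by (auto simp: eventually_at_filter)
qed simp

lemma blinfun_inverse_of_expanding:
  fixes A :: "'a::euclidean_space \<Rightarrow>\<^sub>L 'a"
  assumes m: "m > 0" and expanding: "\<And>v. m * norm v \<le> norm (A v)"
  obtains T :: "'a \<Rightarrow>\<^sub>L 'a" where "\<And>v. T (A v) = v" "\<And>w. A (T w) = w" "norm T \<le> 1 / m"
proof -
  have "inj (blinfun_apply A)"
  proof (rule injI)
    fix a b assume "A a = A b"
    then have "m * norm (a - b) \<le> 0"
      using expanding[of "a - b"] by (simp add: blinfun.diff_right)
    then show "a = b" using m by (simp add: mult_le_0_iff)
  qed
  moreover have lin: "linear (blinfun_apply A)"
    by (simp add: blinfun.bounded_linear_right bounded_linear.linear)
  ultimately obtain G where "linear G" and left: "G \<circ> blinfun_apply A = id"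
    using linear_injective_left_inverse by blast
  moreover from this have right: "blinfun_apply A \<circ> G = id"
    using linear_inverse_left[OF lin] by simp
  ultimately have G: "blinfun_apply (Blinfun G) = G"
    by (simp add: bounded_linear_Blinfun_apply linear_conv_bounded_linear)
  show ?thesis
  proof
    show "Blinfun G (A v) = v" for v using left G by (metis comp_apply id_apply)
    show GA: "A (Blinfun G w) = w" for w using right G by (metis comp_apply id_apply)
    show "norm (Blinfun G) \<le> 1 / m"
    proof (rule norm_blinfun_bound)
      fix w
      have "m * norm (Blinfun G w) \<le> norm w" using expanding[of "Blinfun G w"] GA by simp
      then show "norm (Blinfun G w) \<le> 1 / m * norm w" using m by (simp add: field_simps)
    qed (use m in simp)
  qed
qed

lemma blinfun_inverse_diff:
  fixes A B S T :: "'a::real_normed_vector \<Rightarrow>\<^sub>L 'a"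
  assumes "\<And>v. S (A v) = v" "\<And>w. B (T w) = w"
  shows "S - T = S o\<^sub>L (B - A) o\<^sub>L T"
  by (rule blinfun_eqI) (simp add: assms blinfun.diff_left blinfun.diff_right)

lemma continuous_on_blinfun_inverse:
  fixes A T :: "'b::topological_space \<Rightarrow> 'a::real_normed_vector \<Rightarrow>\<^sub>L 'a"
  assumes cont: "continuous_on U A"
    and left: "\<And>x v. x \<in> U \<Longrightarrow> T x (A x v) = v"
    and right: "\<And>x w. x \<in> U \<Longrightarrow> A x (T x w) = w"
    and bound: "\<And>x. x \<in> U \<Longrightarrow> norm (T x) \<le> K"
  shows "continuous_on U T"
  unfolding continuous_on_def
proof
  fix x assume x: "x \<in> U"
  have "0 \<le> K" using bound[OF x] norm_ge_zero order_trans by blast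
  have "norm (T y - T x) \<le> K * K * norm (A y - A x)" if y: "y \<in> U" for y
  proof -
    have "T y - T x = T y o\<^sub>L (A x - A y) o\<^sub>L T x"
      by (rule blinfun_inverse_diff) (simp_all add: left right x y)
    then have "norm (T y - T x) \<le> norm (T y o\<^sub>L (A x - A y)) * norm (T x)"
      by (simp add: norm_blinfun_compose)
    also have "\<dots> \<le> norm (T y) * norm (A x - A y) * norm (T x)"
      by (rule mult_right_mono[OF norm_blinfun_compose norm_ge_zero])
    also have "\<dots> \<le> K * norm (A x - A y) * K"
      using bound x y \<open>0 \<le> K\<close> by (intro mult_mono) auto
    finally show ?thesis by (simp add: norm_minus_commute mult_ac)
  qed
  then have "\<forall>\<^sub>F y in at x within U. norm (T y - T x) \<le> K * K * norm (A y - A x)"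
    unfolding eventually_at_filter by (simp add: always_eventually)
  moreover have "((\<lambda>y. A y - A x) \<longlongrightarrow> 0) (at x within U)"
    using cont x by (simp add: continuous_on_def LIM_zero)
  then have "((\<lambda>y. K * K * norm (A y - A x)) \<longlongrightarrow> 0) (at x within U)"
    by (rule tendsto_mult_right_zero[OF tendsto_norm_zero])
  ultimately have "((\<lambda>y. T y - T x) \<longlongrightarrow> 0) (at x within U)"
    by (rule Lim_null_comparison)
  then show "(T \<longlongrightarrow> T x) (at x within U)"
    by (simp add: LIM_zero_iff)
qed

lemma norm_id_minus_contraction_ge:
  fixes h :: "'a::real_normed_vector \<Rightarrow> 'a"
  assumes "c-lipschitz_on UNIV h"
  shows "(1 - c) * norm (x - y) \<le> norm ((x - h x) - (y - h y))"
proof -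
  have "norm (x - y) \<le> norm ((x - h x) - (y - h y)) + norm (h x - h y)"
    using norm_triangle_ineq[of "(x - h x) - (y - h y)" "h x - h y"] by simp
  moreover have "norm (h x - h y) \<le> c * norm (x - y)"
    using assms by (rule lipschitz_on_normD) auto
  ultimately show ?thesis by (simp add: algebra_simps)
qed

lemma bij_id_minus_contraction:
  fixes h :: "'a::banach \<Rightarrow> 'a"
  assumes lip: "c-lipschitz_on UNIV h" and "c < 1"
  shows "bij (\<lambda>x. x - h x)"
proof (rule bijI)
  show "inj (\<lambda>x. x - h x)"
  proof (rule injI)
    fix x y assume "x - h x = y - h y"
    then have "(1 - c) * norm (x - y) \<le> 0"
      using norm_id_minus_contraction_ge[OF lip, of x y] by simp
    then show "x = y" using \<open>c < 1\<close> by (simp add: mult_le_0_iff)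
  qed
  show "surj (\<lambda>x. x - h x)"
  proof (rule surj_def[THEN iffD2, rule_format])
    fix y
    have "\<forall>a b. dist (y + h a) (y + h b) \<le> c * dist a b"
      using lipschitz_onD[OF lip] by (simp add: dist_norm)
    then have "\<exists>!x. y + h x = x"
      by (rule banach_fix_type[OF lipschitz_on_nonneg[OF lip] \<open>c < 1\<close>])
    then obtain x where "y + h x = x" by blast
    then show "\<exists>x. y = x - h x" by (metis add_diff_cancel_right')
  qed
qed

lemma C1_mapI:
  assumes "\<And>x. (g has_derivative blinfun_apply (D x)) (at x)" and "continuous_on UNIV D"
  shows "C1_map g"
  unfolding C1_map_def using assms by (intro exI[of _ D]) blast

lemma C1_mapE:
  assumes "C1_map g"
  obtains D where "\<And>x. (g has_derivative blinfun_apply (D x)) (at x)" and "continuous_on UNIV D"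
  using assms unfolding C1_map_def by blast

lemma C1_map_compose_bounded_linear:
  assumes "bounded_linear P" and "C1_map F"
  shows "C1_map (\<lambda>x. P (F x))"
proof -
  obtain D where D: "\<And>x. (F has_derivative blinfun_apply (D x)) (at x)" and "continuous_on UNIV D"
    using \<open>C1_map F\<close> by (erule C1_mapE)
  have "((\<lambda>x. P (F x)) has_derivative blinfun_apply (Blinfun P o\<^sub>L D x)) (at x)" for x
    by (rule has_derivative_eq_rhs[OF bounded_linear.has_derivative[OF assms(1) D]])
      (simp add: bounded_linear_Blinfun_apply[OF assms(1)] fun_eq_iff)
  moreover have "continuous_on UNIV (\<lambda>x. Blinfun P o\<^sub>L D x)"
    by (intro continuous_intros) fact
  ultimately show ?thesis by (rule C1_mapI)
qed

lemma C1_map_id_minus: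
  assumes "C1_map h"
  shows "C1_map (\<lambda>x. x - h x)"
proof -
  obtain D where D: "\<And>x. (h has_derivative blinfun_apply (D x)) (at x)" and "continuous_on UNIV D"
    using assms by (erule C1_mapE)
  have "((\<lambda>x. x - h x) has_derivative blinfun_apply (id_blinfun - D x)) (at x)" for x
    by (rule has_derivative_eq_rhs[OF has_derivative_diff[OF has_derivative_ident D]])
      (simp add: blinfun.diff_left fun_eq_iff)
  moreover have "continuous_on UNIV (\<lambda>x. id_blinfun - D x)"
    by (intro continuous_intros) fact
  ultimately show ?thesis by (rule C1_mapI)
qed

lemma C1_map_inv_of_expanding:
  fixes g :: "real^'n \<Rightarrow> real^'n"
  assumes "bij g" and "C1_map g" and m: "m > 0"
    and expanding: "\<And>x y. m * norm (x - y) \<le> norm (g x - g y)"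
  shows "C1_map (inv g)"
proof -
  obtain D where D: "\<And>x. (g has_derivative blinfun_apply (D x)) (at x)" and "continuous_on UNIV D"
    using \<open>C1_map g\<close> by (erule C1_mapE)
  have "\<forall>x. \<exists>T :: (real^'n) \<Rightarrow>\<^sub>L (real^'n).
      (\<forall>v. blinfun_apply T (D x v) = v) \<and> (\<forall>w. D x (blinfun_apply T w) = w) \<and> norm T \<le> 1 / m"
  proof
    fix x
    have "m * norm v \<le> norm (D x v)" for v
      by (rule norm_derivative_ge_of_expanding_at[OF D]) (use expanding in simp)
    then show "\<exists>T. (\<forall>v. blinfun_apply T (D x v) = v) \<and> (\<forall>w. D x (blinfun_apply T w) = w)
        \<and> norm T \<le> 1 / m"
      using blinfun_inverse_of_expanding[OF m] by metis
  qed
  then obtain T :: "real^'n \<Rightarrow> (real^'n) \<Rightarrow>\<^sub>L (real^'n)"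
    where left: "\<And>x v. T x (D x v) = v" and right: "\<And>x w. D x (T x w) = w"
    and bound: "\<And>x. norm (T x) \<le> 1 / m"
    by metis
  have inv_g: "g (inv g y) = y" for y
    using \<open>bij g\<close> by (simp add: bij_is_surj surj_f_inv_f)
  have "(1 / m)-lipschitz_on UNIV (inv g)"
  proof (rule lipschitz_onI)
    fix a b :: "real^'n"
    show "dist (inv g a) (inv g b) \<le> 1 / m * dist a b"
      using expanding[of "inv g a" "inv g b"] m by (simp add: inv_g dist_norm field_simps)
  qed (use m in simp)
  then have cont_inv: "continuous_on UNIV (inv g)"
    by (rule lipschitz_on_continuous_on)
  have "(inv g has_derivative blinfun_apply (T (inv g y))) (at y)" for y
  proof -
    have "(inv g has_derivative blinfun_apply (T (inv g y))) (at (g (inv g y)))"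
    proof (rule has_derivative_inverse_basic_x[OF D _ _ _ _ open_UNIV])
      show "blinfun_apply (T (inv g y)) \<circ> blinfun_apply (D (inv g y)) = id"
        using left by auto
      show "continuous (at (g (inv g y))) (inv g)"
        using cont_inv by (simp add: continuous_on_eq_continuous_at)
    qed (auto simp: inv_g bij_is_inj[OF \<open>bij g\<close>] blinfun.bounded_linear_right)
    then show ?thesis by (simp add: inv_g)
  qed
  moreover have "continuous_on UNIV (\<lambda>y. T (inv g y))"
    using continuous_on_blinfun_inverse[OF \<open>continuous_on UNIV D\<close>] left right bound
    by (intro continuous_on_compose2[OF _ cont_inv]) auto
  ultimately show ?thesis by (rule C1_mapI)
qed

lemma diffeomorphism_id_minus_contraction:
  fixes h :: "real^'n \<Rightarrow> real^'n"
  assumes "C1_map h" and lip: "c-lipschitz_on UNIV h" and "c < 1"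
  shows "diffeomorphism (\<lambda>x. x - h x)"
  unfolding diffeomorphism_def
proof (intro conjI)
  show bij: "bij (\<lambda>x. x - h x)"
    using lip \<open>c < 1\<close> by (rule bij_id_minus_contraction)
  show C1: "C1_map (\<lambda>x. x - h x)"
    using \<open>C1_map h\<close> by (rule C1_map_id_minus)
  show "C1_map (inv (\<lambda>x. x - h x))"
    using bij C1 norm_id_minus_contraction_ge[OF lip] \<open>c < 1\<close>
    by (intro C1_map_inv_of_expanding[where m = "1 - c"]) auto
qed

lemma bounded_linear_block_embed: "bounded_linear (block_embed S)"
proof -
  have "linear (block_embed S)"
    by (rule linearI) (auto simp: block_embed_def vec_eq_iff)
  then show ?thesis by (simp add: linear_conv_bounded_linear)
qed

lemma block_embed_diff: "block_embed S (x - y) = block_embed S x - block_embed S y"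
  by (simp add: block_embed_def vec_eq_iff)

lemma norm_block_embed_le: "norm (block_embed S v) \<le> norm v"
  by (rule norm_le_componentwise_cart) (simp add: block_embed_def)

theorem lemma1:
  fixes f :: "real^'n \<Rightarrow> real"
    and gradf :: "real^'n \<Rightarrow> real^'n"
    and L \<alpha> :: real
    and p :: nat
    and B :: "nat \<Rightarrow> 'n set"
    and s :: nat
  assumes grad: "\<And>x. (f has_derivative (\<lambda>h. gradf x \<bullet> h)) (at x)"
    and C2: "C1_map gradf"
    and Lpos: "L > 0"
    and Lip: "\<And>x y. norm (gradf x - gradf y) \<le> L * norm (x - y)"
    and blocks_nonempty: "\<And>t. t \<in> {1..p} \<Longrightarrow> B t \<noteq> {}"
    and blocks_disjoint: "\<And>t u. t \<in> {1..p} \<Longrightarrow> u \<in> {1..p} \<Longrightarrow> t \<noteq> u \<Longrightarrow> B t \<inter> B u = {}"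
    and blocks_cover: "(\<Union>t\<in>{1..p}. B t) = UNIV"
    and \<alpha>pos: "0 < \<alpha>"
    and \<alpha>small: "\<alpha> < 1 / L"
    and s: "s \<in> {1..p}"
  shows "diffeomorphism (\<lambda>x. x - \<alpha> *\<^sub>R block_embed (B s) (gradf x))"
proof (rule diffeomorphism_id_minus_contraction)
  have "bounded_linear (\<lambda>v. \<alpha> *\<^sub>R block_embed (B s) v)"
    using bounded_linear_block_embed by (rule bounded_linear_compose[OF bounded_linear_scaleR_right])
  then show "C1_map (\<lambda>x. \<alpha> *\<^sub>R block_embed (B s) (gradf x))"
    using C2 by (rule C1_map_compose_bounded_linear)
  show "(\<alpha> * L)-lipschitz_on UNIV (\<lambda>x. \<alpha> *\<^sub>R block_embed (B s) (gradf x))"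
  proof (rule lipschitz_onI)
    fix x y :: "real^'n"
    have "dist (\<alpha> *\<^sub>R block_embed (B s) (gradf x)) (\<alpha> *\<^sub>R block_embed (B s) (gradf y))
        = \<alpha> * norm (block_embed (B s) (gradf x - gradf y))"
      using \<alpha>pos by (simp add: dist_norm block_embed_diff flip: scaleR_diff_right)
    also have "\<dots> \<le> \<alpha> * (L * norm (x - y))"
      using \<alpha>pos by (intro mult_left_mono order_trans[OF norm_block_embed_le Lip]) simp
    finally show "dist (\<alpha> *\<^sub>R block_embed (B s) (gradf x)) (\<alpha> *\<^sub>R block_embed (B s) (gradf y))
        \<le> \<alpha> * L * dist x y"
      by (simp add: dist_norm)
  qed (use \<alpha>pos Lpos in simp)
  show "\<alpha> * L < 1"
    using \<alpha>small Lpos by (simp add: field_simps)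
qed

end
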